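(* Let $(E,\mathcal{I})$ be the partition matroid given by a partition $E_1,\dots,E_b$ of $E$ and integers $k_z$ with $2\le k_z\le|E_z|$, and let $\gamma=\min_{z\in[b]}\lfloor k_z/2\rfloor/k_z$. Suppose $f:2^E\times O^E\to\mathbb{R}_{\ge0}$ is worst-case monotone and worst-case submodular with respect to $p(\phi)$ and satisfies minimal dependency. Then the adaptive hybrid policy $\pi^m=\pi^{mw}@\pi^{ma}$ satisfies $f_{wc}(\pi^*_{wc})\le(1+\frac1\gamma)f_{wc}(\pi^m)$, where $\pi^*_{wc}$ maximizes $f_{wc}(\pi)$ over policies $\pi$ with $E(\pi,\phi)\in\mathcal{I}$ for all $\phi\in U^+$.
   Context: Setting. $E$ is a finite set of $n$ items and $O$ a finite set of states. A realization is a function $\phi:E\to O$; $p$ is a probability distribution (prior) on the set of all realizations, $\Phi$ denotes a random realization with law $p$, and $U^+=\{\phi: p(\phi)>0\}$. A partial realization is a function $\psi:S\to O$ with $S\subseteq E$, $\mathrm{dom}(\psi)=S$; it is identified with the set of pairs $\{(e,\psi(e)):e\in S\}$, so $\psi\subseteq\psi'$ means $\mathrm{dom}(\psi)\subseteq\mathrm{dom}(\psi')$ and they agree on $\mathrm{dom}(\psi)$. A realization $\phi$ is consistent with $\psi$, written $\phi\sim\psi$, if it agrees with $\psi$ on $\mathrm{dom}(\psi)$. Only partial realizations with $\Pr[\Phi\sim\psi]>0$ are considered, and $p(\phi\mid\psi)=\Pr[\Phi=\phi\mid\Phi\sim\psi]$. For $S\subseteq E$ and a partial realization $\psi$, $f(S,\psi)=\mathbb{E}[f(S,\Phi)\mid\Phi\sim\psi]$.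 For $e\notin\mathrm{dom}(\psi)$, let $O(e,\psi)=\{o\in O:\exists\phi\text{ with }p(\phi\mid\psi)>0,\ \phi(e)=o\}$ and define the worst-case marginal utility $f_{wc}(e\mid\psi)=\min_{o\in O(e,\psi)}\{f(\mathrm{dom}(\psi)\cup\{e\},\psi\cup\{(e,o)\})-f(\mathrm{dom}(\psi),\psi)\}$ and the expected marginal utility $f_{avg}(e\mid\psi)=\mathbb{E}[f(\mathrm{dom}(\psi)\cup\{e\},\Phi)-f(\mathrm{dom}(\psi),\Phi)\mid\Phi\sim\psi]$. $f$ is worst-case submodular if $f_{wc}(e\mid\psi)\ge f_{wc}(e\mid\psi')$ for all partial realizations $\psi\subseteq\psi'$ and all $e\in E\setminus\mathrm{dom}(\psi')$; it is worst-case monotone if $f_{wc}(e\mid\psi)\ge0$ for all $\psi$ and $e\notin\mathrm{dom}(\psi)$. $f$ satisfies minimal dependency if $f(\mathrm{dom}(\psi),\psi)=f(\mathrm{dom}(\psi),\phi)$ for every partial realization $\psi$ and every $\phi\in U^+$ with $\phi\sim\psi$. Policies. A (deterministic) policy $\pi$ is a rule which, given the current observation (the partial realization of the items selected so far), either selects a new item or stops; after an item $e$ is selected under realization $\phi$, the state $\phi(e)$ is observed. $E(\pi,\phi)$ is the set of items selected by $\pi$ under $\phi$, and $f_{wc}(\pi)=\min_{\phi\in U^+}f(E(\pi,\phi),\phi)$. The concatenation $\pi@\pi'$ runs $\pi$ and then runs $\pi'$ from scratch, ignoring the observations obtained by $\pi$; its selected set is the union of the two. Partition matroid: $\mathcal{I}=\{I\subseteq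 E:|I\cap E_z|\le k_z\ \forall z\in[b]\}$. Policy $\pi^{mw}$: starting from the empty observation $\psi=\emptyset$, for $z=1,\dots,b$ in turn, perform $\lfloor k_z/2\rfloor$ iterations, each selecting $e\in\arg\max_{e\in E_z\setminus\mathrm{dom}(\psi)}f_{wc}(e\mid\psi)$ for the current observation $\psi$, observing $\Phi(e)$ and adding $(e,\Phi(e))$ to $\psi$. Policy $\pi^{ma}$: identical except that each meta-round $z$ performs $\lceil k_z/2\rceil$ iterations and uses $f_{avg}(e\mid\psi)$ in place of $f_{wc}(e\mid\psi)$. Ties are broken arbitrarily. $\pi^m=\pi^{mw}@\pi^{ma}$. *)

theory Defs
  imports Complex_Main
begin

text \<open>Items are the elements of a finite type 'e (E = UNIV), states the elements of a
finite type 'o (O = UNIV). A realization is a total function 'e => 'o, a partial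
realization is a map 'e ~=> 'o (its domain is the set of observed items).\<close>

definition is_prior :: "(('e::finite \<Rightarrow> 'o::finite) \<Rightarrow> real) \<Rightarrow> bool" where
  "is_prior p \<longleftrightarrow> (\<forall>\<phi>. 0 \<le> p \<phi>) \<and> sum p UNIV = 1"

definition consistent :: "('e \<Rightarrow> 'o) \<Rightarrow> ('e \<rightharpoonup> 'o) \<Rightarrow> bool" where
  "consistent \<phi> \<psi> \<longleftrightarrow> (\<forall>e\<in>dom \<psi>. \<psi> e = Some (\<phi> e))"

definition pr_cons :: "(('e::finite \<Rightarrow> 'o::finite) \<Rightarrow> real) \<Rightarrow> ('e \<rightharpoonup> 'o) \<Rightarrow> real" where
  "pr_cons p \<psi> = (\<Sum>\<phi>\<in>{\<phi>. consistent \<phi> \<psi>}. p \<phi>)"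

definition cond_prob :: "(('e::finite \<Rightarrow> 'o::finite) \<Rightarrow> real) \<Rightarrow> ('e \<Rightarrow> 'o) \<Rightarrow> ('e \<rightharpoonup> 'o) \<Rightarrow> real" where
  "cond_prob p \<phi> \<psi> = (if consistent \<phi> \<psi> then p \<phi> / pr_cons p \<psi> else 0)"

definition f_part :: "('e::finite set \<Rightarrow> ('e \<Rightarrow> 'o::finite) \<Rightarrow> real) \<Rightarrow> (('e \<Rightarrow> 'o) \<Rightarrow> real)
    \<Rightarrow> 'e set \<Rightarrow> ('e \<rightharpoonup> 'o) \<Rightarrow> real" where
  "f_part f p S \<psi> = (\<Sum>\<phi>\<in>UNIV. cond_prob p \<phi> \<psi> * f S \<phi>)"

definition states_of :: "(('e::finite \<Rightarrow> 'o::finite) \<Rightarrow> real) \<Rightarrow> 'e \<Rightarrow> ('e \<rightharpoonup> 'o) \<Rightarrow> 'o set" where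
  "states_of p e \<psi> = {s. \<exists>\<phi>. cond_prob p \<phi> \<psi> > 0 \<and> \<phi> e = s}"

definition f_wc_marg :: "('e::finite set \<Rightarrow> ('e \<Rightarrow> 'o::finite) \<Rightarrow> real) \<Rightarrow> (('e \<Rightarrow> 'o) \<Rightarrow> real)
    \<Rightarrow> 'e \<Rightarrow> ('e \<rightharpoonup> 'o) \<Rightarrow> real" where
  "f_wc_marg f p e \<psi> =
     Min ((\<lambda>s. f_part f p (insert e (dom \<psi>)) (\<psi>(e \<mapsto> s)) - f_part f p (dom \<psi>) \<psi>)
          ` states_of p e \<psi>)"

definition f_avg_marg :: "('e::finite set \<Rightarrow> ('e \<Rightarrow> 'o::finite) \<Rightarrow> real) \<Rightarrow> (('e \<Rightarrow> 'o) \<Rightarrow> real)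
    \<Rightarrow> 'e \<Rightarrow> ('e \<rightharpoonup> 'o) \<Rightarrow> real" where
  "f_avg_marg f p e \<psi> =
     (\<Sum>\<phi>\<in>UNIV. cond_prob p \<phi> \<psi> * (f (insert e (dom \<psi>)) \<phi> - f (dom \<psi>) \<phi>))"

definition wc_submodular :: "('e::finite set \<Rightarrow> ('e \<Rightarrow> 'o::finite) \<Rightarrow> real) \<Rightarrow> (('e \<Rightarrow> 'o) \<Rightarrow> real) \<Rightarrow> bool" where
  "wc_submodular f p \<longleftrightarrow>
     (\<forall>\<psi> \<psi>' e. pr_cons p \<psi> > 0 \<and> pr_cons p \<psi>' > 0 \<and> \<psi> \<subseteq>\<^sub>m \<psi>' \<and> e \<notin> dom \<psi>'
        \<longrightarrow> f_wc_marg f p e \<psi>' \<le> f_wc_marg f p e \<psi>)"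

definition wc_monotone :: "('e::finite set \<Rightarrow> ('e \<Rightarrow> 'o::finite) \<Rightarrow> real) \<Rightarrow> (('e \<Rightarrow> 'o) \<Rightarrow> real) \<Rightarrow> bool" where
  "wc_monotone f p \<longleftrightarrow>
     (\<forall>\<psi> e. pr_cons p \<psi> > 0 \<and> e \<notin> dom \<psi> \<longrightarrow> 0 \<le> f_wc_marg f p e \<psi>)"

definition minimal_dependency :: "('e::finite set \<Rightarrow> ('e \<Rightarrow> 'o::finite) \<Rightarrow> real) \<Rightarrow> (('e \<Rightarrow> 'o) \<Rightarrow> real) \<Rightarrow> bool" where
  "minimal_dependency f p \<longleftrightarrow>
     (\<forall>\<psi> \<phi>. pr_cons p \<psi> > 0 \<and> p \<phi> > 0 \<and> consistent \<phi> \<psi>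
        \<longrightarrow> f_part f p (dom \<psi>) \<psi> = f (dom \<psi>) \<phi>)"

definition support :: "(('e \<Rightarrow> 'o) \<Rightarrow> real) \<Rightarrow> ('e \<Rightarrow> 'o) set" where
  "support p = {\<phi>. p \<phi> > 0}"

text \<open>Deterministic policies: given the current observation, select an item (Some e) or stop (None).\<close>
definition policy_step :: "(('e \<rightharpoonup> 'o) \<Rightarrow> 'e option) \<Rightarrow> ('e \<Rightarrow> 'o) \<Rightarrow> ('e \<rightharpoonup> 'o) \<Rightarrow> ('e \<rightharpoonup> 'o)" where
  "policy_step \<pi> \<phi> \<psi> = (case \<pi> \<psi> of None \<Rightarrow> \<psi> | Some e \<Rightarrow> \<psi>(e \<mapsto> \<phi> e))"

text \<open>E(pi, phi): after card UNIV steps the execution has stabilised (every effective step adds a new item).\<close>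
definition selected :: "(('e::finite \<rightharpoonup> 'o) \<Rightarrow> 'e option) \<Rightarrow> ('e \<Rightarrow> 'o) \<Rightarrow> 'e set" where
  "selected \<pi> \<phi> = dom ((policy_step \<pi> \<phi> ^^ card (UNIV :: 'e set)) Map.empty)"

definition policy_wc :: "('e::finite set \<Rightarrow> ('e \<Rightarrow> 'o::finite) \<Rightarrow> real) \<Rightarrow> (('e \<Rightarrow> 'o) \<Rightarrow> real)
    \<Rightarrow> (('e \<rightharpoonup> 'o) \<Rightarrow> 'e option) \<Rightarrow> real" where
  "policy_wc f p \<pi> = Min ((\<lambda>\<phi>. f (selected \<pi> \<phi>) \<phi>) ` support p)"

text \<open>f_wc(pi @ pi'): the concatenation selects the union of the two selected sets.\<close>
definition concat_wc :: "('e::finite set \<Rightarrow> ('e \<Rightarrow> 'o::finite) \<Rightarrow> real) \<Rightarrow> (('e \<Rightarrow> 'o) \<Rightarrow> real)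
    \<Rightarrow> (('e \<rightharpoonup> 'o) \<Rightarrow> 'e option) \<Rightarrow> (('e \<rightharpoonup> 'o) \<Rightarrow> 'e option) \<Rightarrow> real" where
  "concat_wc f p \<pi> \<pi>' = Min ((\<lambda>\<phi>. f (selected \<pi> \<phi> \<union> selected \<pi>' \<phi>) \<phi>) ` support p)"

definition partition_matroid :: "nat \<Rightarrow> (nat \<Rightarrow> 'e::finite set) \<Rightarrow> (nat \<Rightarrow> nat) \<Rightarrow> bool" where
  "partition_matroid b parts k \<longleftrightarrow>
     (\<forall>z\<in>{1..b}. 2 \<le> k z \<and> k z \<le> card (parts z)) \<and>
     (\<forall>z\<in>{1..b}. \<forall>z'\<in>{1..b}. z \<noteq> z' \<longrightarrow> parts z \<inter> parts z' = {}) \<and>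
     (\<Union>z\<in>{1..b}. parts z) = UNIV"

definition indep :: "nat \<Rightarrow> (nat \<Rightarrow> 'e set) \<Rightarrow> (nat \<Rightarrow> nat) \<Rightarrow> 'e set \<Rightarrow> bool" where
  "indep b parts k I \<longleftrightarrow> (\<forall>z\<in>{1..b}. card (I \<inter> parts z) \<le> k z)"

definition gamma :: "nat \<Rightarrow> (nat \<Rightarrow> nat) \<Rightarrow> real" where
  "gamma b k = Min ((\<lambda>z. real (k z div 2) / real (k z)) ` {1..b})"

text \<open>Schedules of the meta-rounds: the part index used at each iteration.\<close>
definition mw_sched :: "nat \<Rightarrow> (nat \<Rightarrow> nat) \<Rightarrow> nat list" where
  "mw_sched b k = concat (map (\<lambda>z. replicate (k z div 2) z) [1..<Suc b])"

definition ma_sched :: "nat \<Rightarrow> (nat \<Rightarrow> nat) \<Rightarrow> nat list" where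
  "ma_sched b k = concat (map (\<lambda>z. replicate ((k z + 1) div 2) z) [1..<Suc b])"

text \<open>A tie-breaking selection rule sel is greedy w.r.t. score g and schedule sched: at an
observation psi (with |dom psi| = t iterations done), sel psi is a maximiser of g(. | psi)
over E_{sched ! t} - dom psi.\<close>
definition greedy_rule :: "(('e::finite \<Rightarrow> 'o::finite) \<Rightarrow> real) \<Rightarrow> nat list \<Rightarrow> (nat \<Rightarrow> 'e set)
    \<Rightarrow> ('e \<Rightarrow> ('e \<rightharpoonup> 'o) \<Rightarrow> real) \<Rightarrow> (('e \<rightharpoonup> 'o) \<Rightarrow> 'e) \<Rightarrow> bool" where
  "greedy_rule p sched parts g sel \<longleftrightarrow>
     (\<forall>\<psi>. pr_cons p \<psi> > 0 \<and> card (dom \<psi>) < length sched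
            \<and> parts (sched ! card (dom \<psi>)) - dom \<psi> \<noteq> {}
        \<longrightarrow> sel \<psi> \<in> parts (sched ! card (dom \<psi>)) - dom \<psi>
            \<and> (\<forall>e\<in>parts (sched ! card (dom \<psi>)) - dom \<psi>. g e \<psi> \<le> g (sel \<psi>) \<psi>))"

definition greedy_policy :: "nat list \<Rightarrow> (('e \<rightharpoonup> 'o) \<Rightarrow> 'e) \<Rightarrow> ('e \<rightharpoonup> 'o) \<Rightarrow> 'e option" where
  "greedy_policy sched sel \<psi> = (if card (dom \<psi>) < length sched then Some (sel \<psi>) else None)"

end

theory Submission
  imports Defs
begin

(* Take a realization \<phi> of the support on which the hybrid policy is worst. Its worst-case
   greedy phase alone gives the bound; the average-case phase only adds items, which cannot
   hurt by monotonicity. Let \<psi> be the observation after the worst-case phase and S its domain.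
   Against any feasible policy \<pi>, an adversary answers every query outside \<psi> by a state
   attaining the worst-case marginal, so by submodularity \<pi> gets at most f(S) plus the sum of
   the worst-case marginals at \<psi> of its items outside S. In part z, \<pi> has at most k_z such
   items, and each was available in every one of the k_z div 2 greedy iterations devoted to z,
   so its marginal at \<psi> is at most each of those greedy gains. Averaging loses the factor
   1/\<gamma>, and the greedy gains telescope to at most f(S). *)

lemma pr_cons_pos:
  assumes "is_prior p" "p \<phi> > 0" "consistent \<phi> \<psi>"
  shows "pr_cons p \<psi> > 0"
proof -
  have "p \<phi> \<le> pr_cons p \<psi>" unfolding pr_cons_def
    by (rule member_le_sum) (use assms in \<open>auto simp: is_prior_def\<close>)
  then show ?thesis using assms by simp
qed

lemma pr_cons_posE:
  assumes "is_prior p" "pr_cons p \<psi> > 0"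
  obtains \<phi> where "p \<phi> > 0" "consistent \<phi> \<psi>"
proof (rule ccontr)
  assume "\<not> thesis"
  with that have "\<forall>\<phi>\<in>{\<phi>. consistent \<phi> \<psi>}. p \<phi> \<le> 0" by (auto simp: not_less[symmetric])
  then have "pr_cons p \<psi> \<le> 0" unfolding pr_cons_def by (intro sum_nonpos) auto
  then show False using assms by simp
qed

lemma support_nonempty: "is_prior p \<Longrightarrow> support p \<noteq> {}"
  using pr_cons_posE[of p Map.empty] pr_cons_pos[of p _ Map.empty]
  unfolding support_def is_prior_def pr_cons_def consistent_def by auto

lemma cond_prob_pos_iff:
  assumes "is_prior p"
  shows "cond_prob p \<phi> \<psi> > 0 \<longleftrightarrow> consistent \<phi> \<psi> \<and> p \<phi> > 0"
proof -
  have "0 \<le> p \<phi>" "0 \<le> pr_cons p \<psi>"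
    using assms by (auto simp: is_prior_def pr_cons_def intro: sum_nonneg)
  then show ?thesis
    using pr_cons_pos[OF assms] by (auto simp: cond_prob_def zero_less_divide_iff)
qed

lemma consistent_empty [simp]: "consistent \<phi> Map.empty"
  unfolding consistent_def by simp

lemma consistent_upd: "consistent \<phi> \<psi> \<Longrightarrow> consistent \<phi> (\<psi>(e \<mapsto> \<phi> e))"
  unfolding consistent_def by auto

lemma consistent_map_le: "\<omega> \<subseteq>\<^sub>m \<Psi> \<Longrightarrow> consistent \<phi> \<Psi> \<Longrightarrow> consistent \<phi> \<omega>"
  unfolding consistent_def map_le_def by (metis domI domIff)

lemma consistent_restrict: "consistent \<phi> ((Some \<circ> \<phi>) |` A)"
  unfolding consistent_def by (auto simp: restrict_map_def split: if_splits)

lemma dom_Some_comp [simp]: "dom (Some \<circ> \<phi>) = UNIV"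
  by (auto simp: dom_def)

lemma states_of_upd_pos:
  assumes "is_prior p" "s \<in> states_of p e \<psi>"
  shows "pr_cons p (\<psi>(e \<mapsto> s)) > 0"
proof -
  obtain \<phi> where "consistent \<phi> \<psi>" "p \<phi> > 0" "\<phi> e = s"
    using assms unfolding states_of_def cond_prob_pos_iff[OF assms(1)] by blast
  then show ?thesis using pr_cons_pos[OF assms(1)] consistent_upd by metis
qed

lemma f_wc_marg_attained:
  assumes "is_prior p" "pr_cons p \<psi> > 0"
  obtains s where "s \<in> states_of p e \<psi>"
    "f_wc_marg f p e \<psi> = f_part f p (insert e (dom \<psi>)) (\<psi>(e \<mapsto> s)) - f_part f p (dom \<psi>) \<psi>"
proof -
  obtain \<phi> where "p \<phi> > 0" "consistent \<phi> \<psi>" using pr_cons_posE[OF assms] .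
  then have "states_of p e \<psi> \<noteq> {}"
    unfolding states_of_def cond_prob_pos_iff[OF assms(1)] by blast
  then have "f_wc_marg f p e \<psi> \<in> (\<lambda>s. f_part f p (insert e (dom \<psi>)) (\<psi>(e \<mapsto> s))
               - f_part f p (dom \<psi>) \<psi>) ` states_of p e \<psi>"
    unfolding f_wc_marg_def by (intro Min_in) auto
  then show ?thesis using that by blast
qed

lemma f_part_eq_realization:
  assumes "minimal_dependency f p" "is_prior p" "p \<phi> > 0" "consistent \<phi> \<psi>"
  shows "f_part f p (dom \<psi>) \<psi> = f (dom \<psi>) \<phi>"
  using assms pr_cons_pos[OF assms(2-4)] unfolding minimal_dependency_def by blast

lemma f_wc_marg_le_gain:
  assumes "is_prior p" "minimal_dependency f p" "p \<phi> > 0" "consistent \<phi> \<psi>"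
  shows "f_wc_marg f p e \<psi> \<le> f (insert e (dom \<psi>)) \<phi> - f (dom \<psi>) \<phi>"
proof -
  have c: "consistent \<phi> (\<psi>(e \<mapsto> \<phi> e))" using assms(4) by (rule consistent_upd)
  have "\<phi> e \<in> states_of p e \<psi>"
    unfolding states_of_def cond_prob_pos_iff[OF assms(1)] using assms(3,4) by blast
  then have "f_wc_marg f p e \<psi>
      \<le> f_part f p (insert e (dom \<psi>)) (\<psi>(e \<mapsto> \<phi> e)) - f_part f p (dom \<psi>) \<psi>"
    unfolding f_wc_marg_def by (intro Min_le) auto
  also have "\<dots> = f (insert e (dom \<psi>)) \<phi> - f (dom \<psi>) \<phi>"
    using f_part_eq_realization[OF assms(2,1,3) c] f_part_eq_realization[OF assms(2,1,3,4)]
    by simp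
  finally show ?thesis .
qed

lemma f_mono_on_support:
  assumes "is_prior p" "minimal_dependency f p" "wc_monotone f p" "p \<phi> > 0"
    and "A \<subseteq> (B :: 'e::finite set)"
  shows "f A \<phi> \<le> f B \<phi>"
proof -
  have insert: "f C \<phi> \<le> f (insert e C) \<phi>" for C e
  proof (cases "e \<in> C")
    case False
    let ?\<psi> = "(Some \<circ> \<phi>) |` C"
    have "0 \<le> f_wc_marg f p e ?\<psi>"
      using assms(3) pr_cons_pos[OF assms(1,4) consistent_restrict] False
      unfolding wc_monotone_def by simp
    also have "\<dots> \<le> f (insert e C) \<phi> - f C \<phi>"
      using f_wc_marg_le_gain[OF assms(1,2,4) consistent_restrict] by simp
    finally show ?thesis by simp
  qed (simp add: insert_absorb)
  have "f A \<phi> \<le> f (A \<union> C) \<phi>" if "finite C" for C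
    using that by (induction C rule: finite_induct) (auto intro: order_trans insert)
  from this[of "B - A"] show ?thesis using assms(5) by (simp add: Un_absorb1)
qed

subsection \<open>Executions of a policy\<close>

definition run :: "(('e \<rightharpoonup> 'o) \<Rightarrow> 'e option) \<Rightarrow> ('e \<Rightarrow> 'o) \<Rightarrow> nat \<Rightarrow> ('e \<rightharpoonup> 'o)" where
  "run \<pi> \<phi> t = (policy_step \<pi> \<phi> ^^ t) Map.empty"

lemma selected_eq_run:
  fixes \<pi> :: "('e::finite \<rightharpoonup> 'o) \<Rightarrow> 'e option"
  shows "selected \<pi> \<phi> = dom (run \<pi> \<phi> (card (UNIV :: 'e set)))"
  by (simp add: selected_def run_def)

lemma policy_steps_consistent:
  "consistent \<phi> \<psi> \<Longrightarrow> consistent \<phi> ((policy_step \<pi> \<phi> ^^ n) \<psi>)"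
  by (induction n) (auto simp: policy_step_def intro: consistent_upd split: option.split)

lemma policy_steps_extend:
  assumes "consistent \<phi> \<psi>"
  shows "\<psi> \<subseteq>\<^sub>m (policy_step \<pi> \<phi> ^^ n) \<psi>"
proof (induction n)
  case (Suc n)
  have "(policy_step \<pi> \<phi> ^^ n) \<psi> \<subseteq>\<^sub>m policy_step \<pi> \<phi> ((policy_step \<pi> \<phi> ^^ n) \<psi>)"
    using policy_steps_consistent[OF assms, where \<pi> = \<pi> and n = n]
    unfolding policy_step_def consistent_def map_le_def by (auto split: option.split)
  with Suc show ?case by (auto intro: map_le_trans)
qed simp

lemma run_consistent: "consistent \<phi> (run \<pi> \<phi> t)"
  unfolding run_def by (rule policy_steps_consistent) simp

lemma run_mono:
  assumes "j \<le> t"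
  shows "run \<pi> \<phi> j \<subseteq>\<^sub>m run \<pi> \<phi> t"
proof -
  have "run \<pi> \<phi> t = (policy_step \<pi> \<phi> ^^ (t - j)) (run \<pi> \<phi> j)"
    by (metis assms comp_apply funpow_add le_add_diff_inverse2 run_def)
  then show ?thesis using policy_steps_extend[OF run_consistent] by simp
qed


subsection \<open>The adversary\<close>

lemma worst_state_gain_le:
  assumes "is_prior p" "wc_submodular f p" "pr_cons p \<psi> > 0" "pr_cons p \<Psi> > 0"
    and "\<psi> \<subseteq>\<^sub>m \<Psi>" "e \<notin> dom \<Psi>"
  obtains s where "pr_cons p (\<Psi>(e \<mapsto> s)) > 0"
    "f_part f p (dom (\<Psi>(e \<mapsto> s))) (\<Psi>(e \<mapsto> s)) \<le> f_part f p (dom \<Psi>) \<Psi> + f_wc_marg f p e \<psi>"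
proof -
  obtain s where s: "s \<in> states_of p e \<Psi>"
    "f_wc_marg f p e \<Psi> = f_part f p (insert e (dom \<Psi>)) (\<Psi>(e \<mapsto> s)) - f_part f p (dom \<Psi>) \<Psi>"
    using f_wc_marg_attained[OF assms(1,4)] .
  have "f_wc_marg f p e \<Psi> \<le> f_wc_marg f p e \<psi>"
    using assms(2-6) unfolding wc_submodular_def by blast
  with s that states_of_upd_pos[OF assms(1) s(1)] show thesis by simp
qed

text \<open>Invariant of the adversary argument: \<open>\<Psi>\<close> is what the adversary has committed to so
  far, \<open>\<omega>\<close> the current observation of \<open>\<pi>\<close>, and every item \<open>\<pi>\<close> adds outside \<open>\<Psi>\<close> is
  charged its worst-case marginal at the fixed observation \<open>\<psi>\<close>.\<close>
definition adversary_bound :: "('e::finite set \<Rightarrow> ('e \<Rightarrow> 'o::finite) \<Rightarrow> real) \<Rightarrow> (('e \<Rightarrow> 'o) \<Rightarrow> real)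
    \<Rightarrow> (('e \<rightharpoonup> 'o) \<Rightarrow> 'e option) \<Rightarrow> ('e \<rightharpoonup> 'o) \<Rightarrow> nat \<Rightarrow> ('e \<rightharpoonup> 'o) \<Rightarrow> ('e \<rightharpoonup> 'o) \<Rightarrow> bool" where
  "adversary_bound f p \<pi> \<psi> m \<Psi> \<omega> \<longleftrightarrow> (\<exists>\<phi>'. p \<phi>' > 0 \<and> consistent \<phi>' \<Psi> \<and>
     f (dom \<Psi> \<union> dom ((policy_step \<pi> \<phi>' ^^ m) \<omega>)) \<phi>'
       \<le> f_part f p (dom \<Psi>) \<Psi> + (\<Sum>e\<in>dom ((policy_step \<pi> \<phi>' ^^ m) \<omega>) - dom \<Psi>. f_wc_marg f p e \<psi>))"

lemma funpow_Suc_apply: "(h ^^ Suc m) x = (h ^^ m) (h x)"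
  by (simp only: funpow_Suc_right o_apply)

lemma adversary_bound_0:
  assumes "is_prior p" "minimal_dependency f p" "pr_cons p \<Psi> > 0" "\<omega> \<subseteq>\<^sub>m \<Psi>"
  shows "adversary_bound f p \<pi> \<psi> 0 \<Psi> \<omega>"
proof -
  obtain \<phi>' where \<phi>': "p \<phi>' > 0" "consistent \<phi>' \<Psi>" using pr_cons_posE[OF assms(1,3)] .
  have "dom \<omega> \<subseteq> dom \<Psi>" using assms(4) by (rule map_le_implies_dom_le)
  then have d: "dom \<omega> - dom \<Psi> = {}" "dom \<Psi> \<union> dom \<omega> = dom \<Psi>" by auto
  show ?thesis using \<phi>' f_part_eq_realization[OF assms(2,1) \<phi>']
    unfolding adversary_bound_def d funpow_0 by auto
qed

lemma adversary_bound_stop: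
  "\<pi> \<omega> = None \<Longrightarrow> adversary_bound f p \<pi> \<psi> m \<Psi> \<omega> \<Longrightarrow> adversary_bound f p \<pi> \<psi> (Suc m) \<Psi> \<omega>"
  unfolding adversary_bound_def by (simp only: funpow_Suc_apply policy_step_def option.case)

lemma adversary_bound_observed:
  assumes "\<pi> \<omega> = Some e" "\<Psi> e = Some v" "adversary_bound f p \<pi> \<psi> m \<Psi> (\<omega>(e \<mapsto> v))"
  shows "adversary_bound f p \<pi> \<psi> (Suc m) \<Psi> \<omega>"
proof -
  obtain \<phi>' where \<phi>': "p \<phi>' > 0" "consistent \<phi>' \<Psi>"
    "f (dom \<Psi> \<union> dom ((policy_step \<pi> \<phi>' ^^ m) (\<omega>(e \<mapsto> v)))) \<phi>'
       \<le> f_part f p (dom \<Psi>) \<Psi>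
          + (\<Sum>x\<in>dom ((policy_step \<pi> \<phi>' ^^ m) (\<omega>(e \<mapsto> v))) - dom \<Psi>. f_wc_marg f p x \<psi>)"
    using assms(3) unfolding adversary_bound_def by blast
  moreover have "policy_step \<pi> \<phi>' \<omega> = \<omega>(e \<mapsto> v)"
    using \<phi>'(2) assms(1,2) unfolding consistent_def policy_step_def by force
  ultimately show ?thesis unfolding adversary_bound_def
    by (intro exI[of _ \<phi>']) (simp only: funpow_Suc_apply)
qed

text \<open>A query outside \<open>\<Psi>\<close> is answered by a worst state \<open>s\<close>; the extra item costs at most
  its worst-case marginal at \<open>\<psi>\<close>, which is what the sum on the right accounts for.\<close>
lemma adversary_bound_unobserved:
  assumes "\<pi> \<omega> = Some e" "e \<notin> dom \<Psi>" "\<omega> \<subseteq>\<^sub>m \<Psi>"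
    and gain: "f_part f p (dom (\<Psi>(e \<mapsto> s))) (\<Psi>(e \<mapsto> s)) \<le> f_part f p (dom \<Psi>) \<Psi> + f_wc_marg f p e \<psi>"
    and "adversary_bound f p \<pi> \<psi> m (\<Psi>(e \<mapsto> s)) (\<omega>(e \<mapsto> s))"
  shows "adversary_bound f p \<pi> \<psi> (Suc m) \<Psi> \<omega>"
proof -
  obtain \<phi>' where \<phi>': "p \<phi>' > 0" "consistent \<phi>' (\<Psi>(e \<mapsto> s))"
    "f (dom (\<Psi>(e \<mapsto> s)) \<union> dom ((policy_step \<pi> \<phi>' ^^ m) (\<omega>(e \<mapsto> s)))) \<phi>'
      \<le> f_part f p (dom (\<Psi>(e \<mapsto> s))) (\<Psi>(e \<mapsto> s))
         + (\<Sum>x\<in>dom ((policy_step \<pi> \<phi>' ^^ m) (\<omega>(e \<mapsto> s))) - dom (\<Psi>(e \<mapsto> s)). f_wc_marg f p x \<psi>)"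
    using assms(5) unfolding adversary_bound_def by blast
  define W where "W = dom ((policy_step \<pi> \<phi>' ^^ m) (\<omega>(e \<mapsto> s)))"
  have le: "\<omega>(e \<mapsto> s) \<subseteq>\<^sub>m \<Psi>(e \<mapsto> s)" "\<Psi> \<subseteq>\<^sub>m \<Psi>(e \<mapsto> s)"
    using assms(2,3) map_le_upd unfolding map_le_def by (auto simp: dom_def)
  have step: "policy_step \<pi> \<phi>' \<omega> = \<omega>(e \<mapsto> s)"
    using \<phi>'(2) assms(1) unfolding consistent_def policy_step_def by auto
  have "e \<in> W"
    using policy_steps_extend[OF consistent_map_le[OF le(1) \<phi>'(2)], where \<pi> = \<pi> and n = m]
    unfolding W_def by (auto dest: map_le_implies_dom_le)
  then have union: "dom (\<Psi>(e \<mapsto> s)) \<union> W = dom \<Psi> \<union> W"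
    and "W - dom \<Psi> = insert e (W - dom (\<Psi>(e \<mapsto> s)))" using assms(2) by auto
  then have "(\<Sum>x\<in>W - dom \<Psi>. f_wc_marg f p x \<psi>)
      = f_wc_marg f p e \<psi> + (\<Sum>x\<in>W - dom (\<Psi>(e \<mapsto> s)). f_wc_marg f p x \<psi>)" by simp
  then have "f (dom \<Psi> \<union> W) \<phi>' \<le> f_part f p (dom \<Psi>) \<Psi> + (\<Sum>x\<in>W - dom \<Psi>. f_wc_marg f p x \<psi>)"
    using \<phi>'(3) gain unfolding W_def[symmetric] union by linarith
  then show ?thesis using \<phi>'(1) consistent_map_le[OF le(2) \<phi>'(2)] unfolding adversary_bound_def
    by (intro exI[of _ \<phi>']) (simp only: funpow_Suc_apply step W_def[symmetric] simp_thms)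
qed

lemma adversary_bound_holds:
  assumes prior: "is_prior p" and md: "minimal_dependency f p" and sm: "wc_submodular f p"
    and pos: "pr_cons p \<psi> > 0"
  shows "pr_cons p \<Psi> > 0 \<Longrightarrow> \<psi> \<subseteq>\<^sub>m \<Psi> \<Longrightarrow> \<omega> \<subseteq>\<^sub>m \<Psi> \<Longrightarrow> adversary_bound f p \<pi> \<psi> m \<Psi> \<omega>"
proof (induction m arbitrary: \<omega> \<Psi>)
  case 0
  then show ?case using adversary_bound_0[OF prior md] by blast
next
  case (Suc m)
  show ?case
  proof (cases "\<pi> \<omega>")
    case None
    then show ?thesis using Suc by (blast intro: adversary_bound_stop)
  next
    case (Some e)
    show ?thesis
    proof (cases "e \<in> dom \<Psi>")
      case True
      then obtain v where v: "\<Psi> e = Some v" by blast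
      with Suc.prems(3) have "\<omega>(e \<mapsto> v) \<subseteq>\<^sub>m \<Psi>" unfolding map_le_def by auto
      with Suc v Some show ?thesis by (blast intro: adversary_bound_observed)
    next
      case False
      obtain s where "pr_cons p (\<Psi>(e \<mapsto> s)) > 0" and
        "f_part f p (dom (\<Psi>(e \<mapsto> s))) (\<Psi>(e \<mapsto> s)) \<le> f_part f p (dom \<Psi>) \<Psi> + f_wc_marg f p e \<psi>"
        using worst_state_gain_le[OF prior sm pos Suc.prems(1,2) False] .
      moreover have "\<psi> \<subseteq>\<^sub>m \<Psi>(e \<mapsto> s)" "\<omega>(e \<mapsto> s) \<subseteq>\<^sub>m \<Psi>(e \<mapsto> s)"
        using Suc.prems(2,3) False map_le_upd unfolding map_le_def by (auto simp: dom_def)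
      ultimately show ?thesis using Suc.IH Suc.prems(3) Some False
        by (blast intro: adversary_bound_unobserved)
    qed
  qed
qed

subsection \<open>Greedy runs along a schedule\<close>

lemma greedy_run_Suc:
  assumes "card (dom (run (greedy_policy sched sel) \<phi> t)) < length sched"
  shows "run (greedy_policy sched sel) \<phi> (Suc t)
    = (run (greedy_policy sched sel) \<phi> t)(sel (run (greedy_policy sched sel) \<phi> t)
         \<mapsto> \<phi> (sel (run (greedy_policy sched sel) \<phi> t)))"
  using assms by (simp add: run_def policy_step_def greedy_policy_def)

lemma part_not_exhausted:
  fixes parts :: "nat \<Rightarrow> 'e::finite set"
  assumes setS: "set sched \<subseteq> {1..b}"
    and disj: "\<forall>z\<in>{1..b}. \<forall>z'\<in>{1..b}. z \<noteq> z' \<longrightarrow> parts z \<inter> parts z' = {}"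
    and cnt: "\<forall>z\<in>{1..b}. card {j. j < length sched \<and> sched ! j = z} \<le> card (parts z)"
    and t: "t < length sched" and h: "\<forall>j<t. h j \<in> parts (sched ! j)"
  shows "parts (sched ! t) - h ` {..<t} \<noteq> {}"
proof
  define z where "z = sched ! t"
  have z: "z \<in> {1..b}" using setS t unfolding z_def by (meson nth_mem subsetD)
  have "h ` {..<t} \<inter> parts z \<subseteq> h ` {j. j < t \<and> sched ! j = z}"
  proof
    fix x assume "x \<in> h ` {..<t} \<inter> parts z"
    then obtain j where j: "j < t" "x = h j" "x \<in> parts z" by auto
    moreover have "sched ! j \<in> {1..b}" using setS j t by (meson nth_mem subsetD less_trans)
    ultimately have "sched ! j = z" using disj z h by blast
    with j show "x \<in> h ` {j. j < t \<and> sched ! j = z}" by blast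
  qed
  then have "card (h ` {..<t} \<inter> parts z) \<le> card (h ` {j. j < t \<and> sched ! j = z})"
    by (intro card_mono) auto
  also have "\<dots> \<le> card {j. j < t \<and> sched ! j = z}" by (rule card_image_le) auto
  also have "\<dots> < card {j. j < length sched \<and> sched ! j = z}"
    by (rule psubset_card_mono) (use t z_def in auto)
  also have "\<dots> \<le> card (parts z)" using cnt z by blast
  finally have "card (h ` {..<t} \<inter> parts z) < card (parts z)" .
  moreover assume "parts (sched ! t) - h ` {..<t} = {}"
  then have "h ` {..<t} \<inter> parts z = parts z" unfolding z_def by blast
  ultimately show False by simp
qed

lemma greedy_run_invariant:
  fixes parts :: "nat \<Rightarrow> 'e::finite set" and \<phi> :: "'e \<Rightarrow> 'o::finite"
  assumes prior: "is_prior p" and pos: "p \<phi> > 0"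
    and gr: "greedy_rule p sched parts g sel"
    and setS: "set sched \<subseteq> {1..b}"
    and disj: "\<forall>z\<in>{1..b}. \<forall>z'\<in>{1..b}. z \<noteq> z' \<longrightarrow> parts z \<inter> parts z' = {}"
    and cnt: "\<forall>z\<in>{1..b}. card {j. j < length sched \<and> sched ! j = z} \<le> card (parts z)"
  defines "\<psi> \<equiv> run (greedy_policy sched sel) \<phi>"
  shows "t \<le> length sched \<Longrightarrow> card (dom (\<psi> t)) = t \<and> dom (\<psi> t) = (\<lambda>j. sel (\<psi> j)) ` {..<t}
     \<and> (\<forall>j<t. sel (\<psi> j) \<in> parts (sched ! j) - dom (\<psi> j))"
proof (induction t)
  case 0
  then show ?case by (simp add: \<psi>_def run_def)
next
  case (Suc t)
  then have IH: "card (dom (\<psi> t)) = t" "dom (\<psi> t) = (\<lambda>j. sel (\<psi> j)) ` {..<t}"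
    "\<forall>j<t. sel (\<psi> j) \<in> parts (sched ! j) - dom (\<psi> j)" and t: "t < length sched"
    by auto
  have "parts (sched ! t) - dom (\<psi> t) \<noteq> {}"
    unfolding IH(2) using part_not_exhausted[OF setS disj cnt t, of "\<lambda>j. sel (\<psi> j)"] IH(3)
    by blast
  then have new: "sel (\<psi> t) \<in> parts (sched ! t) - dom (\<psi> t)"
    using spec[OF gr[unfolded greedy_rule_def], of "\<psi> t"] pr_cons_pos[OF prior pos run_consistent] IH(1) t
    unfolding \<psi>_def by auto
  have "dom (\<psi> (Suc t)) = insert (sel (\<psi> t)) (dom (\<psi> t))"
    using greedy_run_Suc[of sched sel \<phi> t] IH(1) t unfolding \<psi>_def by simp
  with new IH show ?case by (auto simp: lessThan_Suc less_Suc_eq)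
qed

lemma greedy_run_maximal:
  assumes "greedy_rule p sched parts g sel" "is_prior p" "p \<phi> > 0"
    and "card (dom (run (greedy_policy sched sel) \<phi> j)) = j" "j < length sched"
    and "e \<in> parts (sched ! j) - dom (run (greedy_policy sched sel) \<phi> j)"
  shows "g e (run (greedy_policy sched sel) \<phi> j)
    \<le> g (sel (run (greedy_policy sched sel) \<phi> j)) (run (greedy_policy sched sel) \<phi> j)"
  using spec[OF assms(1)[unfolded greedy_rule_def], of "run (greedy_policy sched sel) \<phi> j"]
    assms(4-6) pr_cons_pos[OF assms(2,3) run_consistent] by auto

lemma mw_sched_set: "set (mw_sched b k) \<subseteq> {1..b}"
  by (auto simp: mw_sched_def)

lemma mw_sched_count:
  assumes "z \<in> {1..b}"
  shows "card {j. j < length (mw_sched b k) \<and> mw_sched b k ! j = z} = k z div 2"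
proof -
  have "card {j. j < length (mw_sched b k) \<and> mw_sched b k ! j = z}
      = length (filter (\<lambda>x. x = z) (mw_sched b k))"
    by (simp add: length_filter_conv_card)
  also have "\<dots> = sum_list (map (\<lambda>z'. length (filter (\<lambda>x. x = z) (replicate (k z' div 2) z')))
      [1..<Suc b])"
    by (simp only: mw_sched_def filter_concat length_concat map_map o_def)
  also have "\<dots> = sum_list (map (\<lambda>z'. if z' = z then k z' div 2 else 0) [1..<Suc b])"
    by (intro arg_cong[where f=sum_list] map_cong refl) (simp del: upt_Suc)
  also have "\<dots> = (\<Sum>z'\<in>{1..<Suc b}. if z' = z then k z' div 2 else 0)"
    by (simp add: sum_list_distinct_conv_sum_set)
  also have "\<dots> = k z div 2" using assms by simp
  finally show ?thesis .
qed

lemma gamma_le: "z \<in> {1..b} \<Longrightarrow> gamma b k \<le> real (k z div 2) / real (k z)"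
  unfolding gamma_def by (intro Min_le) auto

lemma gamma_pos:
  assumes "partition_matroid b parts k"
  shows "gamma b k > 0"
proof -
  have "{1..b} \<noteq> {}" using assms unfolding partition_matroid_def by auto
  then have "gamma b k \<in> (\<lambda>z. real (k z div 2) / real (k z)) ` {1..b}"
    unfolding gamma_def by (intro Min_in) auto
  then obtain z where "z \<in> {1..b}" "gamma b k = real (k z div 2) / real (k z)" by blast
  moreover from this(1) have "2 \<le> k z" using assms unfolding partition_matroid_def by auto
  ultimately show ?thesis by simp
qed

lemma sum_le_sum_div_ratio:
  fixes c :: "'a \<Rightarrow> real" and g :: "'b \<Rightarrow> real" and \<gamma> :: real
  assumes "finite G" "G \<noteq> {}" "\<forall>j\<in>G. 0 \<le> g j" "\<forall>e\<in>T. \<forall>j\<in>G. c e \<le> g j"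
    and "card T \<le> K" "\<gamma> * K \<le> card G" "\<gamma> > 0"
  shows "(\<Sum>e\<in>T. c e) \<le> (\<Sum>j\<in>G. g j) / \<gamma>"
proof -
  let ?X = "\<Sum>e\<in>T. c e" and ?Y = "\<Sum>j\<in>G. g j" and ?n = "real (card G)"
  have Y: "0 \<le> ?Y" using assms(3) by (simp add: sum_nonneg)
  have "?n * ?X = (\<Sum>e\<in>T. \<Sum>j\<in>G. c e)" by (simp add: sum_distrib_left)
  also have "\<dots> \<le> (\<Sum>e\<in>T. \<Sum>j\<in>G. g j)" using assms(4) by (intro sum_mono) auto
  also have "\<dots> = card T * ?Y" by simp
  also have "\<dots> \<le> K * ?Y" using assms(5) Y by (intro mult_right_mono) auto
  finally have "\<gamma> * (?n * ?X) \<le> (\<gamma> * K) * ?Y"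
    using assms(7) by (simp add: mult_left_mono mult.assoc)
  also have "\<dots> \<le> ?n * ?Y" using assms(6) Y by (rule mult_right_mono)
  finally have "?n * (\<gamma> * ?X) \<le> ?n * ?Y" by (simp add: algebra_simps)
  moreover have "?n > 0" using assms(1,2) by (simp add: card_gt_0_iff)
  ultimately have "\<gamma> * ?X \<le> ?Y" by simp
  with assms(7) show ?thesis by (simp add: le_divide_eq mult.commute)
qed

lemma sum_wc_marg_le_telescope:
  assumes "is_prior p" "minimal_dependency f p" "p \<phi> > 0"
    and "\<And>j. j < n \<Longrightarrow> consistent \<phi> (\<psi> j)"
    and "\<And>j. j < n \<Longrightarrow> dom (\<psi> (Suc j)) = insert (e j) (dom (\<psi> j))"
  shows "(\<Sum>j<n. f_wc_marg f p (e j) (\<psi> j)) \<le> f (dom (\<psi> n)) \<phi> - f (dom (\<psi> 0)) \<phi>"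
proof -
  have "(\<Sum>j<n. f_wc_marg f p (e j) (\<psi> j)) \<le> (\<Sum>j<n. f (dom (\<psi> (Suc j))) \<phi> - f (dom (\<psi> j)) \<phi>)"
    using f_wc_marg_le_gain[OF assms(1-3) assms(4)] assms(5) by (intro sum_mono) simp
  also have "\<dots> = f (dom (\<psi> n)) \<phi> - f (dom (\<psi> 0)) \<phi>" by (rule sum_lessThan_telescope)
  finally show ?thesis .
qed

subsection \<open>The worst-case greedy phase\<close>

lemma mw_sched_fits:
  assumes "partition_matroid b parts k"
  shows "\<forall>z\<in>{1..b}. card {j. j < length (mw_sched b k) \<and> mw_sched b k ! j = z} \<le> card (parts z)"
  using assms mw_sched_count[of _ b k] unfolding partition_matroid_def
  by (metis div_le_dividend le_trans)

lemma mw_run_invariant: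
  assumes "is_prior p" "partition_matroid b parts k" "p \<phi> > 0"
    and "greedy_rule p (mw_sched b k) parts g sel"
    and "t \<le> length (mw_sched b k)"
  defines "\<psi> \<equiv> run (greedy_policy (mw_sched b k) sel) \<phi>"
  shows "card (dom (\<psi> t)) = t \<and> dom (\<psi> t) = (\<lambda>j. sel (\<psi> j)) ` {..<t}
     \<and> (\<forall>j<t. sel (\<psi> j) \<in> parts (mw_sched b k ! j) - dom (\<psi> j))"
  using greedy_run_invariant[OF assms(1,3,4) mw_sched_set _ mw_sched_fits[OF assms(2)]] assms(2,5)
  unfolding \<psi>_def partition_matroid_def by blast

text \<open>An item of part \<open>z\<close> not chosen by the worst-case greedy phase was available at every
  iteration devoted to \<open>z\<close>; by submodularity its worst-case marginal at the end is at most
  the greedy gain of that iteration.\<close>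
lemma wc_marg_le_greedy_gain:
  fixes sel :: "('e::finite \<rightharpoonup> 'o::finite) \<Rightarrow> 'e"
  assumes prior: "is_prior p" and pm: "partition_matroid b parts k"
    and ws: "wc_submodular f p" and gw: "greedy_rule p (mw_sched b k) parts (f_wc_marg f p) sel"
    and pos: "p \<phi> > 0"
  defines "\<psi> \<equiv> run (greedy_policy (mw_sched b k) sel) \<phi>" and "n \<equiv> card (UNIV :: 'e set)"
  assumes j: "j < length (mw_sched b k)"
    and e: "e \<in> parts (mw_sched b k ! j) - dom (\<psi> n)"
  shows "f_wc_marg f p e (\<psi> n) \<le> f_wc_marg f p (sel (\<psi> j)) (\<psi> j)"
proof -
  have inv: "card (dom (\<psi> j)) = j"
    using mw_run_invariant[OF prior pm pos gw, of j] j unfolding \<psi>_def by linarith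
  have "card (dom (\<psi> j)) \<le> n" unfolding n_def by (simp add: card_mono)
  then have le: "\<psi> j \<subseteq>\<^sub>m \<psi> n" using inv by (simp add: \<psi>_def run_mono)
  then have "e \<in> parts (mw_sched b k ! j) - dom (\<psi> j)"
    using e map_le_implies_dom_le by fastforce
  then have "f_wc_marg f p e (\<psi> j) \<le> f_wc_marg f p (sel (\<psi> j)) (\<psi> j)"
    using greedy_run_maximal[OF gw prior pos _ j] inv unfolding \<psi>_def by blast
  moreover have "f_wc_marg f p e (\<psi> n) \<le> f_wc_marg f p e (\<psi> j)"
    using ws le e pr_cons_pos[OF prior pos run_consistent] unfolding wc_submodular_def \<psi>_def
    by blast
  ultimately show ?thesis by linarith
qed

lemma mw_greedy_gains_le:
  fixes f :: "'e::finite set \<Rightarrow> ('e \<Rightarrow> 'o::finite) \<Rightarrow> real"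
    and sel :: "('e \<rightharpoonup> 'o) \<Rightarrow> 'e"
  assumes prior: "is_prior p" and pm: "partition_matroid b parts k"
    and nonneg: "\<forall>S \<phi>. 0 \<le> f S \<phi>" and wm: "wc_monotone f p" and md: "minimal_dependency f p"
    and gw: "greedy_rule p (mw_sched b k) parts (f_wc_marg f p) sel" and pos: "p \<phi> > 0"
  defines "\<psi> \<equiv> run (greedy_policy (mw_sched b k) sel) \<phi>" and "n \<equiv> card (UNIV :: 'e set)"
  shows "(\<Sum>j<length (mw_sched b k). f_wc_marg f p (sel (\<psi> j)) (\<psi> j)) \<le> f (dom (\<psi> n)) \<phi>"
proof -
  let ?L = "length (mw_sched b k)"
  have card_run: "card (dom (\<psi> t)) = t" if "t \<le> ?L" for t
    using mw_run_invariant[OF prior pm pos gw that] unfolding \<psi>_def by blast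
  have step: "dom (\<psi> (Suc j)) = insert (sel (\<psi> j)) (dom (\<psi> j))" if "j < ?L" for j
    using greedy_run_Suc[of "mw_sched b k" sel \<phi> j] card_run[of j] that unfolding \<psi>_def by simp
  have "?L \<le> n" using card_run[of ?L] card_mono[of UNIV "dom (\<psi> ?L)"] unfolding n_def by simp
  then have "dom (\<psi> ?L) \<subseteq> dom (\<psi> n)"
    unfolding \<psi>_def by (intro map_le_implies_dom_le run_mono)
  have "(\<Sum>j<?L. f_wc_marg f p (sel (\<psi> j)) (\<psi> j)) \<le> f (dom (\<psi> ?L)) \<phi> - f (dom (\<psi> 0)) \<phi>"
    using step \<psi>_def run_consistent by (intro sum_wc_marg_le_telescope[OF prior md pos]) blast+
  also have "\<dots> \<le> f (dom (\<psi> n)) \<phi>"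
    using f_mono_on_support[OF prior md wm pos \<open>dom (\<psi> ?L) \<subseteq> dom (\<psi> n)\<close>] nonneg
    by (simp add: diff_le_eq add_increasing2)
  finally show ?thesis .
qed

lemma wc_marg_sum_outside_le:
  fixes f :: "'e::finite set \<Rightarrow> ('e \<Rightarrow> 'o::finite) \<Rightarrow> real"
    and sel :: "('e \<rightharpoonup> 'o) \<Rightarrow> 'e"
  assumes prior: "is_prior p" and pm: "partition_matroid b parts k"
    and nonneg: "\<forall>S \<phi>. 0 \<le> f S \<phi>" and wm: "wc_monotone f p" and ws: "wc_submodular f p"
    and md: "minimal_dependency f p"
    and gw: "greedy_rule p (mw_sched b k) parts (f_wc_marg f p) sel"
    and pos: "p \<phi> > 0" and ind: "indep b parts k E"
  defines "\<psi> \<equiv> run (greedy_policy (mw_sched b k) sel) \<phi>" and "n \<equiv> card (UNIV :: 'e set)"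
  shows "(\<Sum>e\<in>E - dom (\<psi> n). f_wc_marg f p e (\<psi> n)) \<le> f (dom (\<psi> n)) \<phi> / gamma b k"
proof -
  let ?L = "length (mw_sched b k)" and ?T = "E - dom (\<psi> n)"
  define g where "g j = f_wc_marg f p (sel (\<psi> j)) (\<psi> j)" for j
  define G where "G z = {j. j < ?L \<and> mw_sched b k ! j = z}" for z
  have per_part: "(\<Sum>e\<in>?T \<inter> parts z. f_wc_marg f p e (\<psi> n)) \<le> (\<Sum>j\<in>G z. g j) / gamma b k"
    if z: "z \<in> {1..b}" for z
  proof (rule sum_le_sum_div_ratio)
    have kz: "2 \<le> k z" using pm z unfolding partition_matroid_def by auto
    show "finite (G z)" by (simp add: G_def)
    show "G z \<noteq> {}" using mw_sched_count[OF z, of k] kz unfolding G_def by force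
    show "\<forall>j\<in>G z. 0 \<le> g j"
    proof
      fix j assume "j \<in> G z"
      then have "sel (\<psi> j) \<notin> dom (\<psi> j)"
        using mw_run_invariant[OF prior pm pos gw, of "Suc j"] unfolding G_def \<psi>_def by simp
      then show "0 \<le> g j" using wm pr_cons_pos[OF prior pos run_consistent]
        unfolding wc_monotone_def g_def \<psi>_def by blast
    qed
    show "\<forall>e\<in>?T \<inter> parts z. \<forall>j\<in>G z. f_wc_marg f p e (\<psi> n) \<le> g j"
      using wc_marg_le_greedy_gain[OF prior pm ws gw pos] unfolding g_def G_def \<psi>_def n_def by auto
    show "card (?T \<inter> parts z) \<le> k z"
      using ind z card_mono[of "E \<inter> parts z" "?T \<inter> parts z"] unfolding indep_def by fastforce
    show "gamma b k * k z \<le> card (G z)"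
      using gamma_le[OF z, of k] kz mw_sched_count[OF z, of k]
      unfolding G_def by (simp add: le_divide_eq)
    show "gamma b k > 0" using pm by (rule gamma_pos)
  qed
  have disjoint: "\<forall>z\<in>{1..b}. \<forall>z'\<in>{1..b}. z \<noteq> z' \<longrightarrow> ?T \<inter> parts z \<inter> (?T \<inter> parts z') = {}"
    using pm unfolding partition_matroid_def by blast
  have "?T = (\<Union>z\<in>{1..b}. ?T \<inter> parts z)" using pm unfolding partition_matroid_def by blast
  then have "(\<Sum>e\<in>?T. f_wc_marg f p e (\<psi> n))
      = (\<Sum>e\<in>(\<Union>z\<in>{1..b}. ?T \<inter> parts z). f_wc_marg f p e (\<psi> n))" by simp
  also have "\<dots> = (\<Sum>z\<in>{1..b}. \<Sum>e\<in>?T \<inter> parts z. f_wc_marg f p e (\<psi> n))"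
    using disjoint by (intro sum.UNION_disjoint) auto
  also have "\<dots> \<le> (\<Sum>z\<in>{1..b}. (\<Sum>j\<in>G z. g j) / gamma b k)" using per_part by (rule sum_mono)
  also have "\<dots> = (\<Sum>j<?L. g j) / gamma b k"
  proof -
    have "{..<?L} = (\<Union>z\<in>{1..b}. G z)"
      using mw_sched_set[of b k] unfolding G_def by (auto dest: nth_mem)
    then have "(\<Sum>j<?L. g j) = (\<Sum>j\<in>(\<Union>z\<in>{1..b}. G z). g j)" by (simp only:)
    also have "\<dots> = (\<Sum>z\<in>{1..b}. \<Sum>j\<in>G z. g j)"
      by (intro sum.UNION_disjoint) (auto simp: G_def)
    finally show ?thesis by (simp add: sum_divide_distrib)
  qed
  also have "\<dots> \<le> f (dom (\<psi> n)) \<phi> / gamma b k"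
    using mw_greedy_gains_le[OF prior pm nonneg wm md gw pos] gamma_pos[OF pm]
    unfolding g_def \<psi>_def n_def by (simp add: divide_right_mono)
  finally show ?thesis .
qed

lemma mw_realization_bound:
  fixes f :: "'e::finite set \<Rightarrow> ('e \<Rightarrow> 'o::finite) \<Rightarrow> real"
    and sel :: "('e \<rightharpoonup> 'o) \<Rightarrow> 'e"
  assumes prior: "is_prior p" and pm: "partition_matroid b parts k"
    and nonneg: "\<forall>S \<phi>. 0 \<le> f S \<phi>" and wm: "wc_monotone f p" and ws: "wc_submodular f p"
    and md: "minimal_dependency f p"
    and gw: "greedy_rule p (mw_sched b k) parts (f_wc_marg f p) sel"
    and ind: "\<forall>\<phi>\<in>support p. indep b parts k (selected \<pi> \<phi>)" and pos: "p \<phi> > 0"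
  shows "policy_wc f p \<pi> \<le> (1 + 1 / gamma b k) * f (selected (greedy_policy (mw_sched b k) sel) \<phi>) \<phi>"
proof -
  define \<psi> where "\<psi> = run (greedy_policy (mw_sched b k) sel) \<phi> (card (UNIV :: 'e set))"
  have "pr_cons p \<psi> > 0" unfolding \<psi>_def by (rule pr_cons_pos[OF prior pos run_consistent])
  from adversary_bound_holds[OF prior md ws this this map_le_refl map_le_empty]
  obtain \<phi>' where \<phi>': "p \<phi>' > 0" and adversary: "f (dom \<psi> \<union> selected \<pi> \<phi>') \<phi>'
      \<le> f_part f p (dom \<psi>) \<psi> + (\<Sum>e\<in>selected \<pi> \<phi>' - dom \<psi>. f_wc_marg f p e \<psi>)"
    unfolding adversary_bound_def selected_def by blast
  have "policy_wc f p \<pi> \<le> f (selected \<pi> \<phi>') \<phi>'"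
    unfolding policy_wc_def using \<phi>' by (intro Min_le) (auto simp: support_def)
  also have "\<dots> \<le> f (dom \<psi> \<union> selected \<pi> \<phi>') \<phi>'"
    using f_mono_on_support[OF prior md wm \<phi>'] by simp
  also have "\<dots> \<le> f (dom \<psi>) \<phi> + f (dom \<psi>) \<phi> / gamma b k"
    using adversary f_part_eq_realization[OF md prior pos run_consistent]
      wc_marg_sum_outside_le[OF prior pm nonneg wm ws md gw pos, of "selected \<pi> \<phi>'"] ind \<phi>'
    unfolding \<psi>_def support_def by force
  finally show ?thesis by (simp add: \<psi>_def selected_eq_run algebra_simps)
qed

lemma concat_wc_attained:
  assumes "is_prior p"
  obtains \<phi> where "\<phi> \<in> support p"
    "concat_wc f p \<pi> \<pi>' = f (selected \<pi> \<phi> \<union> selected \<pi>' \<phi>) \<phi>"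
proof -
  have "concat_wc f p \<pi> \<pi>' \<in> (\<lambda>\<phi>. f (selected \<pi> \<phi> \<union> selected \<pi>' \<phi>) \<phi>) ` support p"
    unfolding concat_wc_def using support_nonempty[OF assms] by (intro Min_in) auto
  with that show thesis by blast
qed

theorem lemma1:
  fixes f :: "'e::finite set \<Rightarrow> ('e \<Rightarrow> 'o::finite) \<Rightarrow> real"
    and p :: "('e \<Rightarrow> 'o) \<Rightarrow> real"
    and b :: nat and parts :: "nat \<Rightarrow> 'e set" and k :: "nat \<Rightarrow> nat"
    and sel_w sel_a :: "('e \<rightharpoonup> 'o) \<Rightarrow> 'e"
    and \<pi> :: "('e \<rightharpoonup> 'o) \<Rightarrow> 'e option"
  assumes "is_prior p"
    and "partition_matroid b parts k"
    and "\<forall>S \<phi>. 0 \<le> f S \<phi>"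
    and "wc_monotone f p"
    and "wc_submodular f p"
    and "minimal_dependency f p"
    and "greedy_rule p (mw_sched b k) parts (f_wc_marg f p) sel_w"
    and "greedy_rule p (ma_sched b k) parts (f_avg_marg f p) sel_a"
    and "\<forall>\<phi>\<in>support p. indep b parts k (selected \<pi> \<phi>)"
  shows "policy_wc f p \<pi> \<le> (1 + 1 / gamma b k) *
           concat_wc f p (greedy_policy (mw_sched b k) sel_w) (greedy_policy (ma_sched b k) sel_a)"
proof -
  let ?\<pi>w = "greedy_policy (mw_sched b k) sel_w" and ?\<pi>a = "greedy_policy (ma_sched b k) sel_a"
  obtain \<phi> where \<phi>: "\<phi> \<in> support p"
    and attained: "concat_wc f p ?\<pi>w ?\<pi>a = f (selected ?\<pi>w \<phi> \<union> selected ?\<pi>a \<phi>) \<phi>"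
    using concat_wc_attained[OF assms(1)] .
  then have pos: "p \<phi> > 0" by (simp add: support_def)
  have "policy_wc f p \<pi> \<le> (1 + 1 / gamma b k) * f (selected ?\<pi>w \<phi>) \<phi>"
    using mw_realization_bound[OF assms(1-7,9) pos] .
  also have "\<dots> \<le> (1 + 1 / gamma b k) * f (selected ?\<pi>w \<phi> \<union> selected ?\<pi>a \<phi>) \<phi>"
    using f_mono_on_support[OF assms(1,6,4) pos] gamma_pos[OF assms(2)]
    by (intro mult_left_mono) (auto simp: add_pos_pos)
  finally show ?thesis unfolding attained .
qed

end
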